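(* Let $\Phi_{\vec p}=\sum_{k,l}p_{kl}U_{kl}\otimes\overline{U}_{kl}$ be an arbitrary Weyl channel. In the reordered product basis $\{|j\oplus k,j\rangle:\ k,j\in\{0,\dots,N-1\}\}$ the superoperator $\Phi_{\vec p}$ is block diagonal, $\Phi_{\vec p}=\bigoplus_{k=0}^{N-1}\Phi^{(k)}_{\vec p}$, where each block $\Phi^{(k)}_{\vec p}=\sum_{k'}\big(\sum_lp_{k'l}\,\omega^{kl}\big)X^{k'}$ is an $N\times N$ circulant matrix. Consequently the spectrum of $\Phi_{\vec p}$ is contained in the regular $N$-gon with vertices $1,\omega,\dots,\omega^{N-1}$ (the convex hull of the $N$-th roots of unity). Moreover the block $\Phi^{(0)}_{\vec p}$ equals $T(\Phi_{\vec p})=\sum_kq_kX^k$ with $q_k=\sum_lp_{kl}$, so the spectrum of $\Phi_{\vec p}$ contains the spectrum of $T(\Phi_{\vec p})$.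
   Context: Let $N\ge2$, $\omega=e^{2\pi i/N}$, $X|j\rangle=|j\oplus1\rangle$ (addition mod $N$), $Z=\mathrm{diag}(1,\omega,\dots,\omega^{N-1})$, Weyl unitaries $U_{kl}=X^kZ^l$. Maps on $N\times N$ matrices are identified with superoperators acting on $|A\rangle\rangle=\sum A_{ij}|i\rangle|j\rangle$ ($\rho\mapsto K\rho K^\dagger$ corresponds to $K\otimes\overline K$). A Weyl channel is $\Phi_{\vec p}=\sum_{k,l}p_{kl}U_{kl}\otimes\overline{U}_{kl}$ with $(p_{kl})$ a probability vector; its hyper-decoherence is the $N\times N$ matrix $T(\Phi)_{ij}=\langle ii|\Phi|jj\rangle=\mathrm{Tr}[|i\rangle\langle i|\,\Phi(|j\rangle\langle j|)]$. *)

theory Defs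
  imports "HOL-Analysis.Analysis" "Jordan_Normal_Form.Matrix" "Jordan_Normal_Form.Char_Poly"
begin

definition omega :: "nat \<Rightarrow> complex" where
  "omega N = cis (2 * pi / real N)"

definition shiftX :: "nat \<Rightarrow> complex mat" where
  "shiftX N = Matrix.mat N N (\<lambda>(i, j). if i = (j + 1) mod N then 1 else 0)"

definition clockZ :: "nat \<Rightarrow> complex mat" where
  "clockZ N = Matrix.mat N N (\<lambda>(i, j). if i = j then omega N ^ i else 0)"

definition weylU :: "nat \<Rightarrow> nat \<Rightarrow> nat \<Rightarrow> complex mat" where
  "weylU N k l = (shiftX N ^\<^sub>m k) * (clockZ N ^\<^sub>m l)"

definition kron :: "complex mat \<Rightarrow> complex mat \<Rightarrow> complex mat" where
  "kron A B = Matrix.mat (dim_row A * dim_row B) (dim_col A * dim_col B)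
     (\<lambda>(r, c). A $$ (r div dim_row B, c div dim_col B) * B $$ (r mod dim_row B, c mod dim_col B))"

definition conj_mat :: "complex mat \<Rightarrow> complex mat" where
  "conj_mat A = map_mat cnj A"

definition msum :: "nat \<Rightarrow> ('i \<Rightarrow> complex mat) \<Rightarrow> 'i set \<Rightarrow> complex mat" where
  "msum n F S = Matrix.mat n n (\<lambda>ij. \<Sum>s\<in>S. F s $$ ij)"

text \<open>Weyl channel superoperator (an N^2 x N^2 matrix, basis |i>|j> at index i*N+j).\<close>
definition weyl_channel :: "nat \<Rightarrow> (nat \<Rightarrow> nat \<Rightarrow> real) \<Rightarrow> complex mat" where
  "weyl_channel N p = msum (N * N)
     (\<lambda>(k, l). complex_of_real (p k l) \<cdot>\<^sub>m kron (weylU N k l) (conj_mat (weylU N k l)))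
     ({0..<N} \<times> {0..<N})"

definition is_prob_vector :: "nat \<Rightarrow> (nat \<Rightarrow> nat \<Rightarrow> real) \<Rightarrow> bool" where
  "is_prob_vector N p \<longleftrightarrow> (\<forall>k<N. \<forall>l<N. p k l \<ge> 0) \<and> (\<Sum>k<N. \<Sum>l<N. p k l) = 1"

definition hyperdec :: "nat \<Rightarrow> complex mat \<Rightarrow> complex mat" where
  "hyperdec N Phi = Matrix.mat N N (\<lambda>(i, j). Phi $$ (i * N + i, j * N + j))"

text \<open>Index of the reordered basis vector |j+k mod N, j> (block k, position j).\<close>
definition ridx :: "nat \<Rightarrow> nat \<Rightarrow> nat \<Rightarrow> nat" where
  "ridx N k j = ((j + k) mod N) * N + j"

definition weyl_block :: "nat \<Rightarrow> (nat \<Rightarrow> nat \<Rightarrow> real) \<Rightarrow> nat \<Rightarrow> complex mat" where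
  "weyl_block N p k = msum N
     (\<lambda>k'. (\<Sum>l<N. complex_of_real (p k' l) * omega N ^ (k * l)) \<cdot>\<^sub>m (shiftX N ^\<^sub>m k'))
     {0..<N}"

definition mspectrum :: "complex mat \<Rightarrow> complex set" where
  "mspectrum A = {e. eigenvalue A e}"

end

theory Submission
  imports Defs "HOL-Number_Theory.Cong"
begin

(* Each term U(k,l) (x) conj U(k,l) of the channel shifts both tensor
   factors by k, so it maps |j + k0, j> to |j + k + k0, j + k> up to a phase: the
   sets {|j + k0, j> : j < N} are invariant, and on the k0-th one the phases of U
   and conj U cancel to w^(k0 l). Each block is therefore the circulant matrix
   sum_k' (sum_l p(k',l) w^(k0 l)) X^k'. The Fourier vectors (w^(j b))_j form a
   complete set of left eigenvectors of any circulant matrix, so the eigenvalues of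
   block k0 are sum_(k',l) p(k',l) w^(k0 l + k' b), convex combinations of N-th roots
   of unity. Block 0 is the hyper-decoherence T, whose spectrum is thus part of the
   spectrum of the channel. *)

lemma omega_power: "omega N ^ m = cis (2 * pi * real m / real N)"
  unfolding omega_def Complex.DeMoivre by (simp add: field_simps)

lemma norm_omega_power [simp]: "norm (omega N ^ m) = 1"
  by (simp add: omega_power)

lemma omega_power_mult_cnj: "omega N ^ m * cnj (omega N ^ m) = 1"
  by (metis complex_norm_square norm_omega_power complex_mult_cnj of_real_1 power_one)

lemma omega_power_cong:
  assumes "m mod N = m' mod N"
  shows "omega N ^ m = omega N ^ m'"
proof (cases "N = 0")
  case False
  have "omega N ^ N = 1"
    using False by (simp add: omega_power)
  then have "omega N ^ m = omega N ^ (m mod N)" for m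
    by (metis mult.commute mult_div_mod_eq power_add power_mult power_one mult_1)
  then show ?thesis
    using assms by metis
qed (use assms in simp)

lemma omega_power_mod_mult: "omega N ^ ((x mod N) * l) = omega N ^ (x * l)"
  by (rule omega_power_cong) (simp add: mod_mult_left_eq)

lemma omega_power_shift_mult_cnj:
  "omega N ^ (((j + m) mod N) * l) * cnj (omega N ^ (j * l)) = omega N ^ (m * l)"
proof -
  have "omega N ^ (((j + m) mod N) * l) = omega N ^ (m * l) * omega N ^ (j * l)"
    by (simp add: omega_power_mod_mult distrib_right power_add)
  then show ?thesis
    using omega_power_mult_cnj[of N "j * l"] by (simp add: mult.assoc del: complex_cnj_power)
qed

lemma omega_power_eq_1_iff:
  assumes "N > 0"
  shows "omega N ^ m = 1 \<longleftrightarrow> N dvd m"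
proof -
  have inj: "inj_on (\<lambda>k. omega N ^ k) {..<N}"
    using bij_betw_imp_inj_on[OF Complex.bij_betw_roots_unity[OF assms]] by (simp add: omega_power)
  have "omega N ^ m = 1 \<longleftrightarrow> omega N ^ (m mod N) = omega N ^ 0"
    using omega_power_cong[of "m mod N" N m] by simp
  also have "\<dots> \<longleftrightarrow> m mod N = 0"
    using inj_onD[OF inj] assms by fastforce
  finally show ?thesis
    by (simp add: dvd_eq_mod_eq_0)
qed

lemma sum_omega_power:
  assumes "N > 0"
  shows "(\<Sum>b<N. omega N ^ (m * b)) = (if N dvd m then of_nat N else 0)"
proof (cases "N dvd m")
  case True
  then have "omega N ^ m = 1"
    using assms omega_power_eq_1_iff by blast
  then show ?thesis
    using True by (simp add: power_mult)
next
  case False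
  have "(omega N ^ m) ^ N = 1"
    by (metis assms dvd_triv_right omega_power_eq_1_iff power_mult mult.commute)
  moreover have "omega N ^ m \<noteq> 1"
    using False assms by (simp add: omega_power_eq_1_iff)
  ultimately show ?thesis
    using False geometric_sum[of "omega N ^ m" N] by (simp add: power_mult)
qed

text \<open>The exponent \<open>j + N - i\<close> stands for \<open>j - i\<close> modulo \<open>N\<close> without truncated
  subtraction.\<close>

lemma sum_omega_power_shift:
  assumes "i < N" "j < N"
  shows "(\<Sum>b<N. omega N ^ ((j + N - i) * b)) = (if j = i then of_nat N else 0)"
proof -
  have "N dvd (j + N - i) \<longleftrightarrow> j = i"
  proof (cases "i \<le> j")
    case True
    then have "j + N - i = N + (j - i)"
      by simp
    then have "N dvd (j + N - i) \<longleftrightarrow> N dvd (j - i)"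
      by (metis dvd_add_right_iff dvd_refl)
    moreover have "j - i < N"
      using assms by auto
    ultimately show ?thesis
      using True nat_dvd_not_less[of "j - i" N] by fastforce
  next
    case False
    then show ?thesis
      using assms nat_dvd_not_less[of "j + N - i" N] by auto
  qed
  then show ?thesis
    using assms by (simp add: sum_omega_power)
qed

lemma mult_mat_vec_index_sum:
  assumes "A \<in> carrier_mat n m" "v \<in> carrier_vec m" "i < n"
  shows "(A *\<^sub>v v) $ i = (\<Sum>j<m. A $$ (i, j) * v $ j)"
  using assms by (auto simp: scalar_prod_def atLeast0LessThan intro!: sum.cong)

lemma mult_mat_index_sum:
  assumes "A \<in> carrier_mat n m" "B \<in> carrier_mat m q" "i < n" "j < q"
  shows "(A * B) $$ (i, j) = (\<Sum>c<m. A $$ (i, c) * B $$ (c, j))"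
  using assms by (auto simp: scalar_prod_def atLeast0LessThan intro!: sum.cong)

lemma eigenvalue_of_complete_left_eigenvectors:
  fixes A :: "'a::idom mat"
  assumes A: "A \<in> carrier_mat n n" and "eigenvalue A e"
    and left: "\<And>i. i \<in> I \<Longrightarrow> w i \<in> carrier_vec n \<and> transpose_mat A *\<^sub>v w i = \<mu> i \<cdot>\<^sub>v w i"
    and complete: "\<And>v. v \<in> carrier_vec n \<Longrightarrow> \<forall>i\<in>I. w i \<bullet> v = 0 \<Longrightarrow> v = 0\<^sub>v n"
  shows "e \<in> \<mu> ` I"
proof (rule ccontr)
  assume e: "e \<notin> \<mu> ` I"
  obtain v where v: "v \<in> carrier_vec n" "v \<noteq> 0\<^sub>v n" "A *\<^sub>v v = e \<cdot>\<^sub>v v"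
    using \<open>eigenvalue A e\<close> A by (auto simp: eigenvalue_def eigenvector_def)
  have "w i \<bullet> v = 0" if i: "i \<in> I" for i
  proof -
    have w: "w i \<in> carrier_vec n"
      using left i by blast
    have "\<mu> i * (w i \<bullet> v) = (transpose_mat A *\<^sub>v w i) \<bullet> v"
      using left[OF i] v(1) by simp
    also have "\<dots> = w i \<bullet> (A *\<^sub>v v)"
      by (rule transpose_vec_mult_scalar[OF A v(1) w])
    also have "\<dots> = e * (w i \<bullet> v)"
      using v w by simp
    finally have "(\<mu> i - e) * (w i \<bullet> v) = 0"
      by (simp add: algebra_simps)
    then show ?thesis
      using e i by auto
  qed
  then have "v = 0\<^sub>v n"
    using complete v(1) by blast
  with v(2) show False ..
qed

text \<open>\<open>\<sigma> k j\<close> is the \<open>j\<close>-th index of block \<open>k\<close>: in the basis reordered by \<open>\<sigma>\<close>,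
  \<open>A\<close> is the direct sum of the blocks \<open>B k\<close>.\<close>

context
  fixes A :: "'a::comm_ring_1 mat" and B :: "nat \<Rightarrow> 'a mat"
    and \<sigma> :: "nat \<Rightarrow> nat \<Rightarrow> nat" and K m n :: nat
  assumes \<sigma>: "bij_betw (\<lambda>(k, j). \<sigma> k j) ({..<K} \<times> {..<m}) {..<n}"
    and A: "A \<in> carrier_mat n n"
    and B: "\<And>k. k < K \<Longrightarrow> B k \<in> carrier_mat m m"
    and block: "\<And>k j k' j'. k < K \<Longrightarrow> j < m \<Longrightarrow> k' < K \<Longrightarrow> j' < m \<Longrightarrow>
      A $$ (\<sigma> k j, \<sigma> k' j') = (if k = k' then B k $$ (j, j') else 0)"
begin

lemma block_index_less: "k < K \<Longrightarrow> j < m \<Longrightarrow> \<sigma> k j < n"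
  using bij_betw_apply[OF \<sigma>, of "(k, j)"] by simp

lemma block_index_cases:
  assumes "r < n"
  obtains k j where "k < K" "j < m" "r = \<sigma> k j"
proof -
  have "r \<in> (\<lambda>(k, j). \<sigma> k j) ` ({..<K} \<times> {..<m})"
    using \<sigma> assms by (simp add: bij_betw_def)
  then show ?thesis
    using that by auto
qed

lemma block_diagonal_mult_vec_index:
  assumes v: "v \<in> carrier_vec n" and k: "k < K" and j: "j < m"
  shows "(A *\<^sub>v v) $ \<sigma> k j = (B k *\<^sub>v vec m (\<lambda>j'. v $ \<sigma> k j')) $ j"
proof -
  have "(A *\<^sub>v v) $ \<sigma> k j = (\<Sum>r<n. A $$ (\<sigma> k j, r) * v $ r)"
    by (rule mult_mat_vec_index_sum[OF A v block_index_less[OF k j]])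
  also have "\<dots> = (\<Sum>(k', j')\<in>{..<K} \<times> {..<m}. A $$ (\<sigma> k j, \<sigma> k' j') * v $ \<sigma> k' j')"
    by (subst sum.reindex_bij_betw[OF \<sigma>, symmetric]) (simp add: case_prod_beta')
  also have "\<dots> = (\<Sum>k'<K. if k = k' then (\<Sum>j'<m. B k $$ (j, j') * v $ \<sigma> k j') else 0)"
    unfolding sum.cartesian_product[symmetric] using k j by (intro sum.cong) (auto simp: block)
  also have "\<dots> = (B k *\<^sub>v vec m (\<lambda>j'. v $ \<sigma> k j')) $ j"
    using k j by (simp add: mult_mat_vec_index_sum[OF B[OF k]])
  finally show ?thesis .
qed

lemma eigenvalue_block_diagonal_imp_block:
  assumes "eigenvalue A e"
  shows "\<exists>k<K. eigenvalue (B k) e"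
proof -
  obtain v where v: "v \<in> carrier_vec n" "v \<noteq> 0\<^sub>v n" "A *\<^sub>v v = e \<cdot>\<^sub>v v"
    using assms A by (auto simp: eigenvalue_def eigenvector_def)
  obtain r where r: "r < n" "v $ r \<noteq> 0"
    using v(1,2) by (metis carrier_vecD eq_vecI index_zero_vec)
  obtain k j where kj: "k < K" "j < m" "r = \<sigma> k j"
    using block_index_cases[OF r(1)] by blast
  define u where "u = vec m (\<lambda>j'. v $ \<sigma> k j')"
  have "B k *\<^sub>v u = e \<cdot>\<^sub>v u"
  proof (rule eq_vecI)
    fix j' assume "j' < dim_vec (e \<cdot>\<^sub>v u)"
    then have j': "j' < m"
      by (simp add: u_def)
    show "(B k *\<^sub>v u) $ j' = (e \<cdot>\<^sub>v u) $ j'"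
      using block_diagonal_mult_vec_index[OF v(1) kj(1) j'] v j' block_index_less[OF kj(1) j']
      by (simp add: u_def)
  qed (use B[OF kj(1)] in \<open>simp add: u_def\<close>)
  moreover have "u \<noteq> 0\<^sub>v m"
    using kj r by (metis index_vec index_zero_vec(1) u_def)
  moreover have "u \<in> carrier_vec m"
    by (simp add: u_def)
  ultimately show ?thesis
    using B[OF kj(1)] kj(1) by (auto simp: eigenvalue_def eigenvector_def)
qed

lemma eigenvalue_block_imp_block_diagonal:
  assumes k: "k < K" and "eigenvalue (B k) e"
  shows "eigenvalue A e"
proof -
  obtain u where u: "u \<in> carrier_vec m" "u \<noteq> 0\<^sub>v m" "B k *\<^sub>v u = e \<cdot>\<^sub>v u"
    using assms B by (auto simp: eigenvalue_def eigenvector_def)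
  define \<tau> where "\<tau> = inv_into ({..<K} \<times> {..<m}) (\<lambda>(k, j). \<sigma> k j)"
  define v where "v = vec n (\<lambda>r. if fst (\<tau> r) = k then u $ snd (\<tau> r) else 0)"
  have v: "v \<in> carrier_vec n"
    by (simp add: v_def)
  have v_\<sigma>: "v $ \<sigma> k' j = (if k' = k then u $ j else 0)" if k': "k' < K" and j: "j < m" for k' j
  proof -
    have "\<tau> (\<sigma> k' j) = (k', j)"
      using bij_betw_inv_into_left[OF \<sigma>, of "(k', j)"] k' j by (simp add: \<tau>_def)
    then show ?thesis
      using block_index_less[OF k' j] by (auto simp: v_def)
  qed
  have "A *\<^sub>v v = e \<cdot>\<^sub>v v"
  proof (rule eq_vecI)
    fix r assume "r < dim_vec (e \<cdot>\<^sub>v v)"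
    then obtain k' j where kj: "k' < K" "j < m" "r = \<sigma> k' j"
      using v by (auto elim: block_index_cases)
    have "vec m (\<lambda>j. v $ \<sigma> k' j) = (if k' = k then u else 0\<^sub>v m)"
      using u(1) v_\<sigma>[OF kj(1)] by (intro eq_vecI) auto
    then have "(A *\<^sub>v v) $ r = (if k' = k then (B k *\<^sub>v u) $ j else (B k' *\<^sub>v 0\<^sub>v m) $ j)"
      using block_diagonal_mult_vec_index[OF v kj(1,2)] kj(3) by simp
    also have "\<dots> = (e \<cdot>\<^sub>v v) $ r"
      using u B[OF kj(1)] kj v_\<sigma>[OF kj(1,2)] v block_index_less[OF kj(1,2)] by auto
    finally show "(A *\<^sub>v v) $ r = (e \<cdot>\<^sub>v v) $ r" .
  qed (use A v in simp)
  moreover have "v \<noteq> 0\<^sub>v n"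
  proof -
    obtain j where j: "j < m" "u $ j \<noteq> 0"
      using u(1,2) by (metis carrier_vecD eq_vecI index_zero_vec)
    then show ?thesis
      using v_\<sigma>[OF k j(1)] block_index_less[OF k j(1)] by auto
  qed
  ultimately show ?thesis
    using A v by (auto simp: eigenvalue_def eigenvector_def)
qed

lemma eigenvalue_block_diagonal_iff: "eigenvalue A e \<longleftrightarrow> (\<exists>k<K. eigenvalue (B k) e)"
  using eigenvalue_block_diagonal_imp_block eigenvalue_block_imp_block_diagonal by blast

end

lemma fourier_vectors_complete:
  fixes v :: "complex vec"
  assumes v: "v \<in> carrier_vec N"
    and orth: "\<And>b. b < N \<Longrightarrow> vec N (\<lambda>j. omega N ^ (j * b)) \<bullet> v = 0"
  shows "v = 0\<^sub>v N"
proof (rule eq_vecI)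
  fix i assume "i < dim_vec (0\<^sub>v N :: complex vec)"
  then have i: "i < N"
    by simp
  have "of_nat N * v $ i = (\<Sum>j<N. if j = i then of_nat N * v $ j else 0)"
    using i by simp
  also have "\<dots> = (\<Sum>j<N. (\<Sum>b<N. omega N ^ ((j + N - i) * b)) * v $ j)"
    using i by (intro sum.cong) (simp_all add: sum_omega_power_shift)
  also have "\<dots> = (\<Sum>j<N. \<Sum>b<N. omega N ^ ((N - i) * b) * (omega N ^ (j * b) * v $ j))"
  proof -
    have "(j + N - i) * b = (N - i) * b + j * b" for j b
      using i by (simp add: algebra_simps)
    then show ?thesis
      by (simp add: sum_distrib_right power_add mult.assoc)
  qed
  also have "\<dots> = (\<Sum>b<N. omega N ^ ((N - i) * b) * (vec N (\<lambda>j. omega N ^ (j * b)) \<bullet> v))"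
    using v by (subst sum.swap) (simp add: scalar_prod_def atLeast0LessThan sum_distrib_left)
  also have "\<dots> = 0"
    by (simp add: orth)
  finally show "v $ i = 0\<^sub>v N $ i"
    using i by simp
qed (use v in simp)

lemma index_mult_add_less:
  fixes i j a b :: nat
  assumes "i < a" "j < b"
  shows "i * b + j < a * b"
proof -
  have "i * b + j < (i + 1) * b"
    using assms(2) by simp
  also have "\<dots> \<le> a * b"
    using assms(1) by (intro mult_le_mono1) simp
  finally show ?thesis .
qed

lemma kron_index:
  assumes "i < dim_row A" "i' < dim_col A" "j < dim_row B" "j' < dim_col B"
  shows "kron A B $$ (i * dim_row B + j, i' * dim_col B + j') = A $$ (i, i') * B $$ (j, j')"
  using assms index_mult_add_less[OF assms(1,3)] index_mult_add_less[OF assms(2,4)]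
  by (simp add: kron_def)

lemma shiftX_carrier [simp]: "shiftX N \<in> carrier_mat N N"
  by (simp add: shiftX_def)

lemma clockZ_carrier [simp]: "clockZ N \<in> carrier_mat N N"
  by (simp add: clockZ_def)

lemma weylU_carrier [simp]: "weylU N k l \<in> carrier_mat N N"
  unfolding weylU_def by (rule mult_carrier_mat[OF pow_carrier_mat pow_carrier_mat]) simp_all

lemma shiftX_power_index:
  assumes "a < N" "b < N"
  shows "(shiftX N ^\<^sub>m k) $$ (a, b) = (if a = (b + k) mod N then 1 else 0)"
  using assms
proof (induction k arbitrary: a b)
  case 0
  then show ?case
    by (simp add: shiftX_def)
next
  case (Suc k)
  have "(shiftX N ^\<^sub>m Suc k) $$ (a, b) = (\<Sum>c<N. (shiftX N ^\<^sub>m k) $$ (a, c) * shiftX N $$ (c, b))"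
    using Suc.prems by (simp add: mult_mat_index_sum[of _ N N _ N])
  also have "\<dots> = (\<Sum>c<N. if c = (b + 1) mod N then (if a = (c + k) mod N then 1 else 0) else 0)"
    using Suc by (intro sum.cong) (auto simp: shiftX_def)
  also have "\<dots> = (if a = (b + Suc k) mod N then 1 else 0)"
    using Suc.prems by (simp add: mod_add_left_eq)
  finally show ?case .
qed

lemma clockZ_power_index:
  assumes "a < N" "b < N"
  shows "(clockZ N ^\<^sub>m l) $$ (a, b) = (if a = b then omega N ^ (a * l) else 0)"
  using assms
proof (induction l arbitrary: a b)
  case 0
  then show ?case
    by (simp add: clockZ_def)
next
  case (Suc l)
  have "(clockZ N ^\<^sub>m Suc l) $$ (a, b) = (\<Sum>c<N. (clockZ N ^\<^sub>m l) $$ (a, c) * clockZ N $$ (c, b))"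
    using Suc.prems by (simp add: mult_mat_index_sum[of _ N N _ N])
  also have "\<dots> = (\<Sum>c<N. if c = b then (if a = c then omega N ^ (a * l) else 0) * omega N ^ b else 0)"
    using Suc by (intro sum.cong) (auto simp: clockZ_def)
  also have "\<dots> = (if a = b then omega N ^ (a * Suc l) else 0)"
    using Suc.prems by (simp add: power_add)
  finally show ?case .
qed

lemma weylU_index:
  assumes "a < N" "b < N"
  shows "weylU N k l $$ (a, b) = (if a = (b + k) mod N then omega N ^ (b * l) else 0)"
proof -
  have "weylU N k l $$ (a, b) = (\<Sum>c<N. (shiftX N ^\<^sub>m k) $$ (a, c) * (clockZ N ^\<^sub>m l) $$ (c, b))"
    using assms by (simp add: weylU_def mult_mat_index_sum[of _ N N _ N])
  also have "\<dots> = (\<Sum>c<N. if c = b then (if a = (c + k) mod N then 1 else 0) * omega N ^ (c * l) else 0)"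
    using assms by (intro sum.cong) (auto simp: shiftX_power_index clockZ_power_index)
  also have "\<dots> = (if a = (b + k) mod N then omega N ^ (b * l) else 0)"
    using assms by simp
  finally show ?thesis .
qed

definition circulant :: "nat \<Rightarrow> (nat \<Rightarrow> complex) \<Rightarrow> complex mat" where
  "circulant N c = msum N (\<lambda>k. c k \<cdot>\<^sub>m shiftX N ^\<^sub>m k) {0..<N}"

lemma circulant_carrier [simp]: "circulant N c \<in> carrier_mat N N"
  by (simp add: circulant_def msum_def)

lemma circulant_index:
  assumes "i < N" "j < N"
  shows "circulant N c $$ (i, j) = (\<Sum>k<N. if i = (j + k) mod N then c k else 0)"
  using assms by (auto simp: circulant_def msum_def shiftX_power_index atLeast0LessThan
      carrier_matD[OF shiftX_carrier] intro!: sum.cong)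

lemma circulant_left_eigenvector:
  "transpose_mat (circulant N c) *\<^sub>v vec N (\<lambda>j. omega N ^ (j * b))
     = (\<Sum>k<N. c k * omega N ^ (k * b)) \<cdot>\<^sub>v vec N (\<lambda>j. omega N ^ (j * b))"
proof (rule eq_vecI)
  fix j assume "j < dim_vec ((\<Sum>k<N. c k * omega N ^ (k * b)) \<cdot>\<^sub>v vec N (\<lambda>j. omega N ^ (j * b)))"
  then have j: "j < N"
    by simp
  have "(transpose_mat (circulant N c) *\<^sub>v vec N (\<lambda>j. omega N ^ (j * b))) $ j
      = (\<Sum>i<N. circulant N c $$ (i, j) * omega N ^ (i * b))"
    using j carrier_matD[OF circulant_carrier]
    by (subst mult_mat_vec_index_sum[of _ N N]) (auto intro!: sum.cong)
  also have "\<dots> = (\<Sum>i<N. \<Sum>k<N. if i = (j + k) mod N then c k * omega N ^ (i * b) else 0)"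
    using j by (auto simp: circulant_index sum_distrib_right intro!: sum.cong)
  also have "\<dots> = (\<Sum>k<N. \<Sum>i<N. if i = (j + k) mod N then c k * omega N ^ (i * b) else 0)"
    by (rule sum.swap)
  also have "\<dots> = (\<Sum>k<N. c k * omega N ^ (((j + k) mod N) * b))"
    using j by simp
  also have "\<dots> = (\<Sum>k<N. c k * omega N ^ (k * b)) * omega N ^ (j * b)"
  proof -
    have "omega N ^ (((j + k) mod N) * b) = omega N ^ (k * b) * omega N ^ (j * b)" for k
      by (simp add: omega_power_mod_mult distrib_right power_add)
    then show ?thesis
      by (simp add: sum_distrib_right mult.assoc)
  qed
  finally show "(transpose_mat (circulant N c) *\<^sub>v vec N (\<lambda>j. omega N ^ (j * b))) $ j
      = ((\<Sum>k<N. c k * omega N ^ (k * b)) \<cdot>\<^sub>v vec N (\<lambda>j. omega N ^ (j * b))) $ j"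
    using j by simp
qed (simp add: carrier_matD[OF circulant_carrier])

lemma eigenvalue_circulant:
  assumes "eigenvalue (circulant N c) e"
  shows "\<exists>b<N. e = (\<Sum>k<N. c k * omega N ^ (k * b))"
proof -
  have "e \<in> (\<lambda>b. \<Sum>k<N. c k * omega N ^ (k * b)) ` {..<N}"
  proof (rule eigenvalue_of_complete_left_eigenvectors[OF circulant_carrier assms])
    fix v :: "complex vec"
    assume "v \<in> carrier_vec N" "\<forall>b\<in>{..<N}. vec N (\<lambda>j. omega N ^ (j * b)) \<bullet> v = 0"
    then show "v = 0\<^sub>v N"
      by (intro fourier_vectors_complete) auto
  qed (simp add: circulant_left_eigenvector)
  then show ?thesis
    by auto
qed

lemma weyl_channel_carrier [simp]: "weyl_channel N p \<in> carrier_mat (N * N) (N * N)"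
  by (simp add: weyl_channel_def msum_def)

lemma weyl_channel_index:
  assumes "a < N" "b < N" "a' < N" "b' < N"
  shows "weyl_channel N p $$ (a * N + b, a' * N + b')
    = (\<Sum>k<N. \<Sum>l<N. of_real (p k l) * (weylU N k l $$ (a, a') * cnj (weylU N k l $$ (b, b'))))"
proof -
  have "(of_real (p k l) \<cdot>\<^sub>m kron (weylU N k l) (conj_mat (weylU N k l))) $$ (a * N + b, a' * N + b')
      = of_real (p k l) * (weylU N k l $$ (a, a') * cnj (weylU N k l $$ (b, b')))" for k l
    using assms kron_index[of a "weylU N k l" a' b "conj_mat (weylU N k l)" b']
      index_mult_add_less[OF assms(1,2)] index_mult_add_less[OF assms(3,4)]
    by (simp add: carrier_matD[OF weylU_carrier] conj_mat_def kron_def)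
  then show ?thesis
    using index_mult_add_less[OF assms(1,2)] index_mult_add_less[OF assms(3,4)]
    by (simp add: weyl_channel_def msum_def sum.cartesian_product atLeast0LessThan case_prod_beta)
qed

lemma weyl_block_eq_circulant:
  "weyl_block N p k = circulant N (\<lambda>k'. \<Sum>l<N. of_real (p k' l) * omega N ^ (k * l))"
  by (simp add: weyl_block_def circulant_def)

lemma weyl_channel_ridx:
  assumes "k < N" "j < N" "k' < N" "j' < N"
  shows "weyl_channel N p $$ (ridx N k j, ridx N k' j')
    = (if k = k' then weyl_block N p k $$ (j, j') else 0)"
proof -
  have N: "N > 0"
    using assms by simp
  have summand: "weylU N \<kappa> l $$ ((j + k) mod N, (j' + k') mod N) * cnj (weylU N \<kappa> l $$ (j, j'))
      = (if k = k' \<and> j = (j' + \<kappa>) mod N then omega N ^ (k * l) else 0)" for \<kappa> l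
  proof (cases "j = (j' + \<kappa>) mod N")
    case True
    have "(j + k) mod N = ((j' + k') mod N + \<kappa>) mod N \<longleftrightarrow> [\<kappa> + k + j' = \<kappa> + k' + j'] (mod N)"
      unfolding True cong_def by (simp add: mod_add_left_eq mod_add_right_eq ac_simps)
    also have "\<dots> \<longleftrightarrow> [k = k'] (mod N)"
      by (simp only: cong_add_rcancel_nat cong_add_lcancel_nat)
    also have "\<dots> \<longleftrightarrow> k = k'"
      using assms by (simp add: cong_def)
    finally have shift: "(j + k) mod N = ((j' + k') mod N + \<kappa>) mod N \<longleftrightarrow> k = k'" .
    show ?thesis
      using True shift assms N
      by (simp add: weylU_index omega_power_shift_mult_cnj del: complex_cnj_power)
  qed (use assms in \<open>simp add: weylU_index\<close>)
  have "weyl_channel N p $$ (ridx N k j, ridx N k' j')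
      = (\<Sum>\<kappa><N. \<Sum>l<N. of_real (p \<kappa> l) * (if k = k' \<and> j = (j' + \<kappa>) mod N then omega N ^ (k * l) else 0))"
    using assms N by (simp add: ridx_def weyl_channel_index summand)
  also have "\<dots> = (if k = k' then weyl_block N p k $$ (j, j') else 0)"
    using assms by (auto simp: weyl_block_eq_circulant circulant_index intro!: sum.cong)
  finally show ?thesis .
qed

lemma ridx_bij_betw: "bij_betw (\<lambda>(k, j). ridx N k j) ({..<N} \<times> {..<N}) {..<N * N}"
proof -
  have inj: "inj_on (\<lambda>(k, j). ridx N k j) ({..<N} \<times> {..<N})"
  proof (rule inj_onI, clarsimp)
    fix k j k' j'
    assume kj: "k < N" "j < N" "k' < N" "j' < N" and eq: "ridx N k j = ridx N k' j'"
    have N: "N > 0"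
      using kj by simp
    have j: "j = j'" and "(j + k) mod N = (j' + k') mod N"
      using arg_cong[OF eq, of "\<lambda>r. r mod N"] arg_cong[OF eq, of "\<lambda>r. r div N"] kj N
      by (simp_all add: ridx_def)
    then have "[k = k'] (mod N)"
      by (simp add: cong_def[symmetric] cong_add_lcancel_nat)
    then show "k = k' \<and> j = j'"
      using kj j by (simp add: cong_less_modulus_unique_nat)
  qed
  have "(\<lambda>(k, j). ridx N k j) ` ({..<N} \<times> {..<N}) \<subseteq> {..<N * N}"
    by (auto simp: ridx_def intro!: index_mult_add_less)
  moreover have "card ((\<lambda>(k, j). ridx N k j) ` ({..<N} \<times> {..<N})) = card {..<N * N}"
    using card_image[OF inj] by (simp add: card_cartesian_product)
  ultimately show ?thesis
    using inj by (simp add: bij_betw_def card_subset_eq)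
qed

lemma hyperdec_weyl_channel: "hyperdec N (weyl_channel N p) = weyl_block N p 0"
proof (rule eq_matI)
  fix i j assume "i < dim_row (weyl_block N p 0)" "j < dim_col (weyl_block N p 0)"
  then have ij: "i < N" "j < N"
    by (simp_all add: weyl_block_def msum_def)
  then have "ridx N 0 i = i * N + i" "ridx N 0 j = j * N + j"
    by (simp_all add: ridx_def)
  then show "hyperdec N (weyl_channel N p) $$ (i, j) = weyl_block N p 0 $$ (i, j)"
    using weyl_channel_ridx[of 0 N i 0 j p] ij by (simp add: hyperdec_def)
qed (simp_all add: hyperdec_def weyl_block_def msum_def)

lemma weyl_block_0: "weyl_block N p 0 = circulant N (\<lambda>k. of_real (\<Sum>l<N. p k l))"
  by (simp add: weyl_block_eq_circulant)

lemma weyl_block_eigenvalue_in_convex_hull: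
  assumes p: "is_prob_vector N p" and e: "eigenvalue (weyl_block N p k) e"
  shows "e \<in> convex hull {omega N ^ m | m. m < N}"
proof -
  obtain b where "b < N"
    and eb: "e = (\<Sum>k'<N. (\<Sum>l<N. of_real (p k' l) * omega N ^ (k * l)) * omega N ^ (k' * b))"
    using eigenvalue_circulant e unfolding weyl_block_eq_circulant by blast
  then have N: "N > 0"
    by simp
  have reduce: "omega N ^ ((k * l + k' * b) mod N) = omega N ^ (k * l) * omega N ^ (k' * b)" for k' l
    by (simp add: omega_power_cong[of "(k * l + k' * b) mod N" N "k * l + k' * b"] power_add)
  have "e = (\<Sum>(k', l)\<in>{..<N} \<times> {..<N}. p k' l *\<^sub>R omega N ^ ((k * l + k' * b) mod N))"
    unfolding eb sum_distrib_right sum.cartesian_product[symmetric]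
    by (intro sum.cong refl) (simp add: scaleR_conv_of_real reduce mult.assoc)
  also have "\<dots> \<in> convex hull {omega N ^ m | m. m < N}"
    unfolding case_prod_beta
  proof (rule convex_sum)
    show "(\<Sum>x\<in>{..<N} \<times> {..<N}. p (fst x) (snd x)) = 1"
      using p by (simp add: is_prob_vector_def sum.cartesian_product case_prod_beta)
    show "\<And>x. x \<in> {..<N} \<times> {..<N} \<Longrightarrow> 0 \<le> p (fst x) (snd x)"
      using p by (auto simp: is_prob_vector_def)
    show "\<And>x. x \<in> {..<N} \<times> {..<N} \<Longrightarrow>
        omega N ^ ((k * snd x + fst x * b) mod N) \<in> convex hull {omega N ^ m | m. m < N}"
      using N by (intro hull_inc) auto
  qed (simp_all add: convex_convex_hull)
  finally show ?thesis .
qed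

theorem proposition4:
  fixes N :: nat and p :: "nat \<Rightarrow> nat \<Rightarrow> real"
  assumes "N \<ge> 2" and "is_prob_vector N p"
  shows "(\<forall>k<N. \<forall>j<N. \<forall>k'<N. \<forall>j'<N.
            weyl_channel N p $$ (ridx N k j, ridx N k' j') =
              (if k = k' then weyl_block N p k $$ (j, j') else 0))
     \<and> mspectrum (weyl_channel N p) \<subseteq> convex hull {omega N ^ m | m. m < N}
     \<and> weyl_block N p 0 = hyperdec N (weyl_channel N p)
     \<and> hyperdec N (weyl_channel N p)
         = msum N (\<lambda>k. complex_of_real (\<Sum>l<N. p k l) \<cdot>\<^sub>m (shiftX N ^\<^sub>m k)) {0..<N}
     \<and> mspectrum (hyperdec N (weyl_channel N p)) \<subseteq> mspectrum (weyl_channel N p)"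
proof -
  have blocks: "eigenvalue (weyl_channel N p) e \<longleftrightarrow> (\<exists>k<N. eigenvalue (weyl_block N p k) e)" for e
    by (rule eigenvalue_block_diagonal_iff[OF ridx_bij_betw weyl_channel_carrier _ weyl_channel_ridx])
      (simp_all add: weyl_block_eq_circulant)
  have "mspectrum (weyl_channel N p) \<subseteq> convex hull {omega N ^ m | m. m < N}"
    using blocks weyl_block_eigenvalue_in_convex_hull[OF assms(2)] by (auto simp: mspectrum_def)
  moreover have "mspectrum (hyperdec N (weyl_channel N p)) \<subseteq> mspectrum (weyl_channel N p)"
    using blocks assms(1) by (force simp: mspectrum_def hyperdec_weyl_channel)
  ultimately show ?thesis
    using weyl_channel_ridx[of _ N] hyperdec_weyl_channel weyl_block_0
    by (simp add: circulant_def)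
qed

end
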